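(* Let $m>0$, $V=[-m/2,m/2]$, and let $F$ be the CDF of a distribution $P\in\mathcal{P}$. Then for every $\ell\in V$, $$|F^{-1}(0.5)-\ell|\le 2m\,|0.5-F(\ell)|.$$
   Context: A distribution $P$ on $V$ with density $f_P$ and CDF $F_P$ is single-peaked at $\ell$ if $f_P(x)\le f_P(y)$ whenever $x\le y\le\ell$ or $x\ge y\ge\ell$. $\mathcal{P}$ is the class of absolutely continuous distributions on $V$ that are single-peaked at their median $F_P^{-1}(0.5)$ (a point $t$ with $F_P(t)=1/2$). *)

theory Defs
  imports "HOL-Analysis.Analysis"
begin

definition density_on :: "real set \<Rightarrow> (real \<Rightarrow> real) \<Rightarrow> bool" where
  "density_on V f \<longleftrightarrow> (\<forall>x\<in>V. 0 \<le> f x) \<and> set_integrable lborel V f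
     \<and> (LINT x:V|lborel. f x) = 1"

definition cdf_on :: "real set \<Rightarrow> (real \<Rightarrow> real) \<Rightarrow> real \<Rightarrow> real" where
  "cdf_on V f x = (LINT y:(V \<inter> {..x})|lborel. f y)"

definition single_peaked_at :: "real set \<Rightarrow> (real \<Rightarrow> real) \<Rightarrow> real \<Rightarrow> bool" where
  "single_peaked_at V f l \<longleftrightarrow>
     (\<forall>x\<in>V. \<forall>y\<in>V. (x \<le> y \<and> y \<le> l \<longrightarrow> f x \<le> f y) \<and> (x \<ge> y \<and> y \<ge> l \<longrightarrow> f x \<le> f y))"

text \<open>The class \<P>: absolutely continuous distributions on V single-peaked at a median t
  (a point with F t = 1/2).\<close>
definition class_P :: "real set \<Rightarrow> (real \<Rightarrow> real) \<Rightarrow> real \<Rightarrow> bool" where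
  "class_P V f t \<longleftrightarrow> density_on V f \<and> cdf_on V f t = 1/2 \<and> single_peaked_at V f t"

end

theory Submission
  imports Defs
begin

text \<open>Write \<open>V = [a, b]\<close> and say \<open>l < t\<close>. The density is at most \<open>f l\<close> on
  \<open>[a, l]\<close> and at least \<open>f l\<close> on \<open>[l, t]\<close>, so the mass \<open>B = 1/2 - F l\<close> of \<open>[l, t]\<close>
  is, per unit length, at least the mass \<open>F l\<close> of \<open>[a, l]\<close>. Hence \<open>B\<close> is at least the
  fraction \<open>(t - l) / (t - a)\<close> of the total mass \<open>1/2\<close> of \<open>[a, t]\<close>, i.e.
  \<open>t - l \<le> 2 (t - a) B \<le> 2 m B\<close>. The case \<open>t < l\<close> is symmetric.\<close>

lemma interval_integral_cross_le:
  fixes g :: "real \<Rightarrow> real"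
  assumes "g integrable_on {p..q}" "g integrable_on {r..s}" "p \<le> q" "r \<le> s"
    and "\<forall>x\<in>{p..q}. g x \<le> c" "\<forall>x\<in>{r..s}. c \<le> g x"
  shows "(s - r) * integral {p..q} g \<le> (q - p) * integral {r..s} g"
proof -
  have below: "integral {p..q} g \<le> integral {p..q} (\<lambda>_. c)"
    using assms by (intro integral_le) auto
  have above: "integral {r..s} (\<lambda>_. c) \<le> integral {r..s} g"
    using assms by (intro integral_le) auto
  have "(s - r) * integral {p..q} g \<le> (s - r) * ((q - p) * c)"
    using below assms by (intro mult_left_mono) auto
  also have "\<dots> = (q - p) * ((s - r) * c)"
    by simp
  also have "\<dots> \<le> (q - p) * integral {r..s} g"
    using above assms by (intro mult_left_mono) auto
  finally show ?thesis .
qed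

lemma cdf_on_interval_eq_integral:
  fixes a b x :: real
  assumes "set_integrable lborel {a..b} f" "x \<in> {a..b}"
  shows "cdf_on {a..b} f x = integral {a..x} f"
proof -
  have interval: "{a..b} \<inter> {..x} = {a..x}"
    using assms(2) by auto
  have "set_integrable lborel {a..x} f"
    by (rule set_integrable_subset[OF assms(1)]) (use assms(2) in auto)
  then show ?thesis
    unfolding cdf_on_def interval by (rule set_borel_integral_eq_integral(2))
qed

lemma class_P_median_in_interval:
  assumes "class_P {a..b} f t"
  shows "t \<in> {a..b}"
proof (rule ccontr)
  assume "t \<notin> {a..b}"
  then have "{a..b} \<inter> {..t} = {} \<or> {a..b} \<inter> {..t} = {a..b}"
    by auto
  then have "cdf_on {a..b} f t = 0 \<or> cdf_on {a..b} f t = 1"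
    using assms unfolding class_P_def density_on_def cdf_on_def
    by (auto simp: set_lebesgue_integral_def)
  then show False
    using assms unfolding class_P_def by auto
qed

lemma median_distance_le_left:
  fixes f :: "real \<Rightarrow> real"
  assumes "a \<le> l" "l \<le> t" "f integrable_on {a..t}" "integral {a..t} f = 1/2"
    and "\<forall>x\<in>{a..l}. f x \<le> f l" "\<forall>x\<in>{l..t}. f l \<le> f x"
  shows "(t - l) / 2 \<le> (t - a) * integral {l..t} f"
proof -
  have integrable_sub: "f integrable_on {c..d}" if "a \<le> c" "d \<le> t" for c d
    using integrable_subinterval_real[OF assms(3)] that by auto
  have split: "integral {a..l} f + integral {l..t} f = 1/2"
    using Henstock_Kurzweil_Integration.integral_combine[OF assms(1,2,3)] assms(4) by simp
  have "(t - l) * integral {a..l} f \<le> (l - a) * integral {l..t} f"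
    using assms by (intro interval_integral_cross_le[where c = "f l"] integrable_sub) auto
  then have "(t - l) * (integral {a..l} f + integral {l..t} f) \<le> (t - a) * integral {l..t} f"
    by (simp add: algebra_simps)
  then show ?thesis
    using split by simp
qed

lemma median_distance_le_right:
  fixes f :: "real \<Rightarrow> real"
  assumes "t \<le> l" "l \<le> b" "f integrable_on {t..b}" "integral {t..b} f = 1/2"
    and "\<forall>x\<in>{t..l}. f l \<le> f x" "\<forall>x\<in>{l..b}. f x \<le> f l"
  shows "(l - t) / 2 \<le> (b - t) * integral {t..l} f"
proof -
  have integrable_sub: "f integrable_on {c..d}" if "t \<le> c" "d \<le> b" for c d
    using integrable_subinterval_real[OF assms(3)] that by auto
  have split: "integral {t..l} f + integral {l..b} f = 1/2"
    using Henstock_Kurzweil_Integration.integral_combine[OF assms(1,2,3)] assms(4) by simp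
  have "(l - t) * integral {l..b} f \<le> (b - l) * integral {t..l} f"
    using assms by (intro interval_integral_cross_le[where c = "f l"] integrable_sub) auto
  then have "(l - t) * (integral {t..l} f + integral {l..b} f) \<le> (b - t) * integral {t..l} f"
    by (simp add: algebra_simps)
  then show ?thesis
    using split by simp
qed

lemma class_P_median_distance_le:
  fixes a b t l :: real
  assumes P: "class_P {a..b} f t" and l: "l \<in> {a..b}"
  shows "\<bar>t - l\<bar> \<le> 2 * (b - a) * \<bar>1/2 - cdf_on {a..b} f l\<bar>"
proof -
  have si: "set_integrable lborel {a..b} f"
    and nonneg: "\<forall>x\<in>{a..b}. 0 \<le> f x"
    and total: "integral {a..b} f = 1"
    and peak: "single_peaked_at {a..b} f t"
    using P unfolding class_P_def density_on_def
    by (auto simp: set_borel_integral_eq_integral(2))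
  have t: "t \<in> {a..b}"
    using P by (rule class_P_median_in_interval)
  have integrable_sub: "f integrable_on {c..d}" if "a \<le> c" "d \<le> b" for c d
    using integrable_subinterval_real[OF set_borel_integral_eq_integral(1)[OF si]] that
    by auto
  have combine: "integral {a..d} f = integral {a..c} f + integral {c..d} f"
    if "a \<le> c" "c \<le> d" "d \<le> b" for c d
    using Henstock_Kurzweil_Integration.integral_combine[OF that(1,2) integrable_sub] that by simp
  have lower_half: "integral {a..t} f = 1/2"
    using P cdf_on_interval_eq_integral[OF si t] unfolding class_P_def by simp
  then have upper_half: "integral {t..b} f = 1/2"
    using combine[of t b] t total by simp
  have Fl: "cdf_on {a..b} f l = integral {a..l} f"
    using cdf_on_interval_eq_integral[OF si l] .
  consider "l \<le> t" | "t \<le> l"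
    by linarith
  then show ?thesis
  proof cases
    case 1
    have mass_nonneg: "0 \<le> integral {l..t} f"
      using 1 l t nonneg by (intro integral_nonneg integrable_sub) auto
    have "\<bar>t - l\<bar> = 2 * ((t - l) / 2)"
      using 1 by simp
    also have "\<dots> \<le> 2 * ((t - a) * integral {l..t} f)"
      using 1 l t peak lower_half
      by (intro mult_left_mono median_distance_le_left integrable_sub)
        (auto simp: single_peaked_at_def)
    also have "\<dots> \<le> 2 * ((b - a) * integral {l..t} f)"
      using t mass_nonneg by (simp add: mult_right_mono)
    also have "integral {l..t} f = \<bar>1/2 - cdf_on {a..b} f l\<bar>"
      using Fl combine[of l t] 1 l t lower_half mass_nonneg by simp
    finally show ?thesis
      by (simp only: mult.assoc)
  next
    case 2
    have mass_nonneg: "0 \<le> integral {t..l} f"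
      using 2 l t nonneg by (intro integral_nonneg integrable_sub) auto
    have "\<bar>t - l\<bar> = 2 * ((l - t) / 2)"
      using 2 by simp
    also have "\<dots> \<le> 2 * ((b - t) * integral {t..l} f)"
      using 2 l t peak upper_half
      by (intro mult_left_mono median_distance_le_right integrable_sub)
        (auto simp: single_peaked_at_def)
    also have "\<dots> \<le> 2 * ((b - a) * integral {t..l} f)"
      using t mass_nonneg by (simp add: mult_right_mono)
    also have "integral {t..l} f = \<bar>1/2 - cdf_on {a..b} f l\<bar>"
      using Fl combine[of t l] 2 l t lower_half mass_nonneg by simp
    finally show ?thesis
      by (simp only: mult.assoc)
  qed
qed

theorem lemma7p17:
  fixes m :: real and f :: "real \<Rightarrow> real" and t l :: real
  assumes "m > 0"
    and "class_P {-m/2..m/2} f t"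
    and "l \<in> {-m/2..m/2}"
  shows "\<bar>t - l\<bar> \<le> 2 * m * \<bar>1/2 - cdf_on {-m/2..m/2} f l\<bar>"
  using class_P_median_distance_le[OF assms(2,3)] by simp

end
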